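(* Let $X$ be a series-parallel poset, write $Z_X(x)=\sum_{i=1}^{|X|}c_i\frac{x^i}{(1-x)^{i+1}}$, and let $h^*(x)=\sum_{j=0}^{|X|}h^*_jx^j:=\frac{(1-x)^{|X|+1}}{x}Z^+_X(x)$. Then for every $0\le j\le |X|$, \[ h^*_j=\sum_{i=1}^{|X|-j}(-1)^{|X|-i+j}\,c_i\binom{|X|-i}{j}, \] and $c_{|X|}=\sum_{i=0}^{|X|}h^*_i$.
   Context: For $n\ge1$, $\langle n\rangle$ is the chain $1<\dots<n$. For a finite poset $X$, $\Omega(X,n)$ (resp. $\Omega^+(X,n)$) is the number of maps $f:X\to\langle n\rangle$ with $u<v\Rightarrow f(u)<f(v)$ (resp. $u\le v\Rightarrow f(u)\le f(v)$); $Z_X(x)=\sum_{n\ge1}\Omega(X,n)x^n$, $Z^+_X(x)=\sum_{n\ge1}\Omega^+(X,n)x^n$. For a series-parallel poset, $Z_X$ is a finite linear combination $\sum_{i=1}^{|X|}c_i x^i/(1-x)^{i+1}$ (the $c_i$ are uniquely determined). The concatenation $\mu(Y,W)$ is the disjoint union of $Y$ and $W$ with every element of $Y$ below every element of $W$; $Y\sqcup W$ is the disjoint union with no relations. Series-parallel posets form the smallest class of finite posets containing the one-element poset and closed under $\mu$ and $\sqcup$. *)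

theory Defs
  imports "HOL-Library.FuncSet" "HOL-Computational_Algebra.Formal_Power_Series"
begin

text \<open>A finite poset is represented by a carrier set A and its strict order
  relation R (a set of pairs, R \<subseteq> A \<times> A); u \<le> v means u = v or (u,v) \<in> R.\<close>

inductive series_parallel :: "'a set \<Rightarrow> ('a \<times> 'a) set \<Rightarrow> bool" where
  sp_single: "series_parallel {a} {}"
| sp_par: "series_parallel A R \<Longrightarrow> series_parallel B S \<Longrightarrow> A \<inter> B = {}
            \<Longrightarrow> series_parallel (A \<union> B) (R \<union> S)"
| sp_ser: "series_parallel A R \<Longrightarrow> series_parallel B S \<Longrightarrow> A \<inter> B = {}
            \<Longrightarrow> series_parallel (A \<union> B) (R \<union> S \<union> A \<times> B)"

definition Omega :: "'a set \<Rightarrow> ('a \<times> 'a) set \<Rightarrow> nat \<Rightarrow> nat" where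
  "Omega A R n = card {f \<in> A \<rightarrow>\<^sub>E {1..n}. \<forall>u\<in>A. \<forall>v\<in>A. (u, v) \<in> R \<longrightarrow> f u < f v}"

definition Omega_plus :: "'a set \<Rightarrow> ('a \<times> 'a) set \<Rightarrow> nat \<Rightarrow> nat" where
  "Omega_plus A R n = card {f \<in> A \<rightarrow>\<^sub>E {1..n}.
      \<forall>u\<in>A. \<forall>v\<in>A. (u = v \<or> (u, v) \<in> R) \<longrightarrow> f u \<le> f v}"

definition ZX :: "'a set \<Rightarrow> ('a \<times> 'a) set \<Rightarrow> real fps" where
  "ZX A R = Abs_fps (\<lambda>n. if n \<ge> 1 then real (Omega A R n) else 0)"

definition ZX_plus :: "'a set \<Rightarrow> ('a \<times> 'a) set \<Rightarrow> real fps" where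
  "ZX_plus A R = Abs_fps (\<lambda>n. if n \<ge> 1 then real (Omega_plus A R n) else 0)"

text \<open>h^*(x) = (1-x)^(|X|+1) / x * Z^+_X(x); division by x is fps_shift 1
  (Z^+_X has zero constant term).\<close>
definition hstar :: "'a set \<Rightarrow> ('a \<times> 'a) set \<Rightarrow> real fps" where
  "hstar A R = fps_shift 1 ((1 - fps_X) ^ (card A + 1) * ZX_plus A R)"

end

(* Omega(X,n) and Omega^+(X,n) are values of one polynomial P: Omega(X,n) = P(n) and
   Omega^+(X,n) = (-1)^|X| P(-n) (Stanley's reciprocity). This is proved along the series-parallel
   construction: a disjoint union multiplies the counts, while an ordinal sum turns them into a
   convolution which, in the basis of the binomial polynomials (x choose i), is again polynomial
   and compatible with x |-> -x by Chu-Vandermonde type identities. Comparing with Z_X gives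
   P(x) = sum c_i (x choose i), hence Omega^+(X,n) = sum c_i (-1)^(|X|+i) (n+i-1 choose i), i.e.
   Z^+_X = x sum c_i (-1)^(|X|+i) / (1-x)^(i+1) and h^*(x) = sum c_i (-1)^(|X|+i) (1-x)^(|X|-i).
   Its coefficients can be read off, and their sum h^*(1) is c_|X|. *)

theory Submission
  imports Defs "HOL-Computational_Algebra.Polynomial"
begin

unbundle fps_syntax

definition gbinomial_poly :: "nat \<Rightarrow> real poly" where
  "gbinomial_poly k = smult (1 / fact k) (\<Prod>i = 0..<k. [:- of_nat i, 1:])"

lemma poly_gbinomial_poly [simp]: "poly (gbinomial_poly k) x = x gchoose k"
  by (simp add: gbinomial_poly_def poly_prod gbinomial_mult_fact[symmetric])

lemma degree_gbinomial_poly [simp]: "degree (gbinomial_poly k) = k"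
  by (simp add: gbinomial_poly_def degree_prod_eq_sum_degree)

lemma lead_coeff_gbinomial_poly [simp]: "coeff (gbinomial_poly k) k = 1 / fact k"
proof -
  have "lead_coeff (\<Prod>i = 0..<k. [:- real i, 1:]) = 1"
    by (simp add: lead_coeff_prod)
  then show ?thesis
    by (simp add: gbinomial_poly_def degree_prod_eq_sum_degree)
qed

lemma poly_gbinomial_expansion:
  fixes P :: "real poly"
  assumes "degree P \<le> K"
  obtains a where "\<And>x. poly P x = (\<Sum>i\<le>K. a i * (x gchoose i))"
  using assms
proof (induction K arbitrary: P thesis)
  case 0
  then obtain c where "P = [:c:]"
    by (metis degree_eq_zeroE le_zero_eq)
  then show ?case
    using "0.prems"(1)[of "\<lambda>_. c"] by simp
next
  case (Suc K)
  define d where "d = coeff P (Suc K) * fact (Suc K)"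
  define Q where "Q = P - smult d (gbinomial_poly (Suc K))"
  have "degree Q \<le> Suc K"
    unfolding Q_def using Suc.prems(2) degree_smult_le[of d "gbinomial_poly (Suc K)"]
    by (intro degree_diff_le) auto
  moreover have "coeff Q (Suc K) = 0"
    by (simp add: Q_def d_def)
  ultimately have "degree Q \<le> K"
    by (metis degree_0 le_SucE leading_coeff_0_iff nat.distinct(1))
  then obtain b where b: "\<And>x. poly Q x = (\<Sum>i\<le>K. b i * (x gchoose i))"
    using Suc.IH by blast
  show ?case
  proof (rule Suc.prems(1))
    fix x
    have "poly P x = poly Q x + d * (x gchoose Suc K)"
      by (simp add: Q_def)
    then show "poly P x = (\<Sum>i\<le>Suc K. (b(Suc K := d)) i * (x gchoose i))"
      by (simp add: b)
  qed
qed

lemma poly_eq_if_eq_on_nat: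
  fixes p q :: "real poly"
  assumes "\<And>n::nat. poly p (real n) = poly q (real n)"
  shows "p = q"
proof (rule ccontr)
  assume "p \<noteq> q"
  then have "finite {x. poly (p - q) x = 0}"
    by (intro poly_roots_finite) simp
  moreover have "range real \<subseteq> {x. poly (p - q) x = 0}"
    using assms by auto
  ultimately show False
    using finite_subset infinite_UNIV_char_0 finite_imageD inj_of_nat by blast
qed

lemma sum_choose_mult_choose_upper:
  "(\<Sum>s<m. (s choose p) * ((m - 1 - s) choose q)) = m choose (p + q + 1)"
proof (induction m arbitrary: q)
  case 0
  then show ?case by simp
next
  case (Suc m)
  show ?case
  proof (cases q)
    case 0
    then show ?thesis
      by (simp add: lessThan_Suc_atMost sum_choose_upper)
  next
    case (Suc q')
    have pascal: "(m - s) choose q = ((m - 1 - s) choose q') + ((m - 1 - s) choose q)" if "s < m" for s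
      using that Suc by (simp flip: Suc_diff_Suc)
    have "(\<Sum>s<Suc m. (s choose p) * ((m - s) choose q)) = (\<Sum>s<m. (s choose p) * ((m - s) choose q))"
      using Suc by simp
    also have "\<dots> = (\<Sum>s<m. (s choose p) * ((m - 1 - s) choose q') + (s choose p) * ((m - 1 - s) choose q))"
      by (intro sum.cong refl) (simp add: pascal algebra_simps)
    also have "\<dots> = Suc m choose (p + q + 1)"
      by (simp only: sum.distrib Suc.IH) (simp add: Suc)
    finally show ?thesis
      by simp
  qed
qed

lemma sum_multichoose_mult_multichoose:
  "(\<Sum>t = 1..n. ((t - 1 + p) choose p) * ((n - t + q) choose q)) = (n + p + q) choose (p + q + 1)"
proof -
  let ?m = "n + p + q"
  have "(\<Sum>t = 1..n. ((t - 1 + p) choose p) * ((n - t + q) choose q))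
      = (\<Sum>s\<in>{p..<n + p}. (s choose p) * ((?m - 1 - s) choose q))"
    by (rule sum.reindex_bij_witness[of _ "\<lambda>s. s + 1 - p" "\<lambda>t. t - 1 + p"]) auto
  also have "\<dots> = (\<Sum>s<?m. (s choose p) * ((?m - 1 - s) choose q))"
    by (intro sum.mono_neutral_left) auto
  finally show ?thesis
    using sum_choose_mult_choose_upper[of p "n + p + q" q] by simp
qed

lemma gbinomial_minus_of_nat:
  "(- real m gchoose k) = (-1) ^ k * real ((m + k - 1) choose k)"
proof (cases "m + k = 0")
  case False
  have "(- real m gchoose k) = (-1) ^ k * ((real m + real k - 1) gchoose k)"
    by (rule gbinomial_minus)
  also have "real m + real k - 1 = real (m + k - 1)"
    using False by (subst of_nat_diff) auto
  finally show ?thesis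
    by (simp only: binomial_gbinomial)
qed simp

lemma sum_diff_gbinomial_mult_gbinomial:
  assumes "i \<ge> 1"
  shows "(\<Sum>t = 1..n. ((real t gchoose i) - (real (t - 1) gchoose i)) * (real (n - t) gchoose j))
       = real n gchoose (i + j)"
proof -
  have pascal: "real (Suc s choose i) - real (s choose i) = real (s choose (i - 1))" for s
    using assms by (cases i) auto
  have "(\<Sum>t = 1..n. ((real t gchoose i) - (real (t - 1) gchoose i)) * (real (n - t) gchoose j))
      = (\<Sum>s<n. ((real (Suc s) gchoose i) - (real s gchoose i)) * (real (n - Suc s) gchoose j))"
    by (rule sum.reindex_bij_witness[of _ Suc "\<lambda>t. t - 1"]) auto
  also have "\<dots> = real (\<Sum>s<n. (s choose (i - 1)) * ((n - 1 - s) choose j))"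
  proof -
    have "n - Suc s = n - 1 - s" for s
      by simp
    then show ?thesis
      by (simp only: of_nat_sum of_nat_mult binomial_gbinomial[symmetric] pascal)
  qed
  also have "\<dots> = real n gchoose (i + j)"
    using assms by (simp only: sum_choose_mult_choose_upper) (simp add: binomial_gbinomial)
  finally show ?thesis .
qed

lemma sum_diff_gbinomial_mult_gbinomial_neg:
  assumes "i \<ge> 1"
  shows "(\<Sum>t = 1..n. ((- real t gchoose i) - (- real (t - 1) gchoose i)) * (- real (n + 1 - t) gchoose j))
       = - real n gchoose (i + j)"
proof -
  obtain i' where i: "i = Suc i'"
    using assms by (cases i) auto
  have summand: "((- real t gchoose i) - (- real (t - 1) gchoose i)) * (- real (n + 1 - t) gchoose j)
      = (-1) ^ (i + j) * real (((t - 1 + i') choose i') * ((n - t + j) choose j))"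
    if "t \<in> {1..n}" for t
  proof -
    have "- real (t - 1) = - real t + 1"
      using that by (simp add: of_nat_diff)
    then have "(- real t gchoose i) - (- real (t - 1) gchoose i) = - (- real t gchoose i')"
      using gbinomial_Suc_Suc[of "- real t" i'] by (simp add: i)
    moreover have "t + i' - 1 = t - 1 + i'" "n + 1 - t + j - 1 = n - t + j"
      using that by auto
    ultimately show ?thesis
      by (simp add: gbinomial_minus_of_nat i power_add)
  qed
  have "(\<Sum>t = 1..n. ((- real t gchoose i) - (- real (t - 1) gchoose i)) * (- real (n + 1 - t) gchoose j))
      = (\<Sum>t = 1..n. (-1) ^ (i + j) * real (((t - 1 + i') choose i') * ((n - t + j) choose j)))"
    by (rule sum.cong[OF refl summand])
  also have "\<dots> = (-1) ^ (i + j) * real (\<Sum>t = 1..n. ((t - 1 + i') choose i') * ((n - t + j) choose j))"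
    by (simp only: sum_distrib_left of_nat_sum)
  also have "\<dots> = - real n gchoose (i + j)"
    by (simp only: sum_multichoose_mult_multichoose) (simp add: gbinomial_minus_of_nat i add.assoc)
  finally show ?thesis .
qed

lemma sum_mult_sum_expand:
  fixes \<alpha> \<beta> :: "nat \<Rightarrow> real"
  shows "(\<Sum>t\<in>T. (\<Sum>i\<in>I. \<alpha> i * f t i) * (\<Sum>j\<in>J. \<beta> j * g t j))
       = (\<Sum>i\<in>I. \<Sum>j\<in>J. \<alpha> i * \<beta> j * (\<Sum>t\<in>T. f t i * g t j))"
proof -
  have "(\<Sum>t\<in>T. (\<Sum>i\<in>I. \<alpha> i * f t i) * (\<Sum>j\<in>J. \<beta> j * g t j))
      = (\<Sum>t\<in>T. \<Sum>i\<in>I. \<Sum>j\<in>J. \<alpha> i * \<beta> j * (f t i * g t j))"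
    by (simp add: sum_product algebra_simps)
  also have "\<dots> = (\<Sum>i\<in>I. \<Sum>j\<in>J. \<Sum>t\<in>T. \<alpha> i * \<beta> j * (f t i * g t j))"
    by (subst sum.swap) (simp add: sum.swap[of _ T])
  finally show ?thesis
    by (simp add: sum_distrib_left)
qed

lemma poly_diff_gbinomial_expansion:
  assumes "\<And>x. poly P x = (\<Sum>i\<le>K. a i * (x gchoose i))"
  shows "poly P x - poly P y = (\<Sum>i = 1..K. a i * ((x gchoose i) - (y gchoose i)))"
  by (simp add: assms atMost_atLeast0 sum.atLeast_Suc_atMost sum_subtractf right_diff_distrib)

lemma sum_diff_poly_mult_poly:
  fixes PA PB :: "real poly"
  assumes PA: "\<And>x. poly PA x = (\<Sum>i\<le>K. \<alpha> i * (x gchoose i))"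
    and PB: "\<And>x. poly PB x = (\<Sum>j\<le>K. \<beta> j * (x gchoose j))"
    and basis: "\<And>i j. i \<ge> 1 \<Longrightarrow>
      (\<Sum>t\<in>T. ((a t gchoose i) - (b t gchoose i)) * (c t gchoose j)) = x gchoose (i + j)"
  shows "(\<Sum>t\<in>T. (poly PA (a t) - poly PA (b t)) * poly PB (c t))
       = (\<Sum>i = 1..K. \<Sum>j\<le>K. \<alpha> i * \<beta> j * (x gchoose (i + j)))"
  unfolding poly_diff_gbinomial_expansion[OF PA] PB sum_mult_sum_expand
  by (intro sum.cong refl) (simp add: basis)

lemma poly_difference_convolution:
  fixes PA PB :: "real poly"
  obtains P where
    "\<And>n. (\<Sum>t = 1..n. (poly PA (real t) - poly PA (real (t - 1))) * poly PB (real (n - t)))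
        = poly P (real n)"
    "\<And>n. (\<Sum>t = 1..n. (poly PA (- real t) - poly PA (- real (t - 1))) * poly PB (- real (n + 1 - t)))
        = poly P (- real n)"
proof -
  define K where "K = max (degree PA) (degree PB)"
  obtain \<alpha> where \<alpha>: "\<And>x. poly PA x = (\<Sum>i\<le>K. \<alpha> i * (x gchoose i))"
    using poly_gbinomial_expansion[of PA K] K_def by auto
  obtain \<beta> where \<beta>: "\<And>x. poly PB x = (\<Sum>j\<le>K. \<beta> j * (x gchoose j))"
    using poly_gbinomial_expansion[of PB K] K_def by auto
  \<comment> \<open>The summand i = 0 is dropped: constant differences vanish.\<close>
  define P where "P = (\<Sum>i = 1..K. \<Sum>j\<le>K. smult (\<alpha> i * \<beta> j) (gbinomial_poly (i + j)))"
  have poly_P: "poly P x = (\<Sum>i = 1..K. \<Sum>j\<le>K. \<alpha> i * \<beta> j * (x gchoose (i + j)))" for x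
    by (simp add: P_def poly_sum)
  show ?thesis
  proof (rule that)
    fix n
    show "(\<Sum>t = 1..n. (poly PA (real t) - poly PA (real (t - 1))) * poly PB (real (n - t)))
        = poly P (real n)"
      unfolding poly_P by (rule sum_diff_poly_mult_poly[OF \<alpha> \<beta> sum_diff_gbinomial_mult_gbinomial])
    show "(\<Sum>t = 1..n. (poly PA (- real t) - poly PA (- real (t - 1))) * poly PB (- real (n + 1 - t)))
        = poly P (- real n)"
      unfolding poly_P by (rule sum_diff_poly_mult_poly[OF \<alpha> \<beta> sum_diff_gbinomial_mult_gbinomial_neg])
  qed
qed

definition labelings :: "nat \<Rightarrow> 'a set \<Rightarrow> ('a \<times> 'a) set \<Rightarrow> nat \<Rightarrow> nat \<Rightarrow> ('a \<Rightarrow> nat) set" where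
  "labelings k A R lo hi = {f \<in> A \<rightarrow>\<^sub>E {lo..hi}. \<forall>u\<in>A. \<forall>v\<in>A. (u, v) \<in> R \<longrightarrow> f u + k \<le> f v}"

lemma Omega_eq_card_labelings: "Omega A R n = card (labelings 1 A R 1 n)"
  unfolding Omega_def labelings_def by (simp add: Suc_le_eq)

lemma Omega_plus_eq_card_labelings: "Omega_plus A R n = card (labelings 0 A R 1 n)"
  unfolding Omega_plus_def labelings_def by (rule arg_cong[where f = card]) auto

lemma finite_labelings: "finite A \<Longrightarrow> finite (labelings k A R lo hi)"
  unfolding labelings_def by (rule finite_subset[OF _ finite_PiE[of A "\<lambda>_. {lo..hi}"]]) auto

lemma labelings_mono: "hi \<le> hi' \<Longrightarrow> labelings k A R lo hi \<subseteq> labelings k A R lo hi'"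
  unfolding labelings_def by (auto simp: PiE_iff)

lemma card_labelings_singleton: "card (labelings k {a} {} 1 n) = n"
proof -
  have "labelings k {a} {} 1 n = {a} \<rightarrow>\<^sub>E {1..n}"
    unfolding labelings_def by auto
  then show ?thesis
    by (simp add: card_PiE)
qed

lemma card_labelings_shift: "card (labelings k A R (s + 1) (s + m)) = card (labelings k A R 1 m)"
proof -
  have "bij_betw (\<lambda>f. restrict (\<lambda>x. f x + s) A) (labelings k A R 1 m) (labelings k A R (s + 1) (s + m))"
  proof (rule bij_betwI[where g = "\<lambda>f. restrict (\<lambda>x. f x - s) A"])
    show "(\<lambda>f. restrict (\<lambda>x. f x - s) A) \<in> labelings k A R (s + 1) (s + m) \<rightarrow> labelings k A R 1 m"
      unfolding labelings_def by (auto simp: PiE_iff) fastforce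
  qed (auto simp: labelings_def PiE_iff extensional_def fun_eq_iff)
  then show ?thesis
    by (simp add: bij_betw_same_card)
qed

lemma series_parallel_finite_nonempty:
  "series_parallel A R \<Longrightarrow> finite A \<and> A \<noteq> {} \<and> R \<subseteq> A \<times> A"
  by (induction rule: series_parallel.induct) auto

lemma card_labelings_parallel:
  assumes "A \<inter> B = {}" "R \<subseteq> A \<times> A" "S \<subseteq> B \<times> B"
  shows "card (labelings k (A \<union> B) (R \<union> S) 1 n) = card (labelings k A R 1 n) * card (labelings k B S 1 n)"
proof -
  have "bij_betw (\<lambda>f. (restrict f A, restrict f B)) (labelings k (A \<union> B) (R \<union> S) 1 n)
      (labelings k A R 1 n \<times> labelings k B S 1 n)"
  proof (rule bij_betwI[where g = "\<lambda>(g, h). override_on h g A"])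
    show "(\<lambda>f. (restrict f A, restrict f B)) \<in> labelings k (A \<union> B) (R \<union> S) 1 n
        \<rightarrow> labelings k A R 1 n \<times> labelings k B S 1 n"
      by (auto simp: labelings_def PiE_iff)
    show "(\<lambda>(g, h). override_on h g A) \<in> labelings k A R 1 n \<times> labelings k B S 1 n
        \<rightarrow> labelings k (A \<union> B) (R \<union> S) 1 n"
      using assms by (auto simp: labelings_def PiE_iff extensional_def override_on_def)
    show "(\<lambda>(g, h). override_on h g A) (restrict f A, restrict f B) = f"
      if "f \<in> labelings k (A \<union> B) (R \<union> S) 1 n" for f
      using that by (auto simp: labelings_def PiE_iff extensional_def override_on_def)
    show "(\<lambda>f. (restrict f A, restrict f B)) ((\<lambda>(g, h). override_on h g A) gh) = gh"
      if "gh \<in> labelings k A R 1 n \<times> labelings k B S 1 n" for gh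
      using that assms(1) by (auto simp: labelings_def PiE_iff extensional_def override_on_def fun_eq_iff)
  qed
  then show ?thesis
    by (simp add: bij_betw_same_card card_cartesian_product)
qed

lemma Max_image_top_labeling:
  assumes "finite A" "g \<in> labelings k A R 1 t - labelings k A R 1 (t - 1)"
  shows "Max (g ` A) = t"
proof -
  have le: "\<forall>x\<in>A. g x \<le> t"
    using assms(2) by (auto simp: labelings_def PiE_iff)
  have "\<exists>x\<in>A. g x = t"
  proof (rule ccontr)
    assume "\<not> (\<exists>x\<in>A. g x = t)"
    then have "g \<in> labelings k A R 1 (t - 1)"
      using assms(2) le by (fastforce simp: labelings_def PiE_iff)
    then show False
      using assms(2) by simp
  qed
  then show ?thesis
    using le assms(1) by (intro Max_eqI) auto
qed

text \<open>A labeling of the ordinal sum is split according to the maximum t of its values on A.\<close>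

lemma card_labelings_series:
  assumes "A \<inter> B = {}" "R \<subseteq> A \<times> A" "S \<subseteq> B \<times> B" "finite A" "A \<noteq> {}" "finite B"
  shows "card (labelings k (A \<union> B) (R \<union> S \<union> A \<times> B) 1 n)
       = (\<Sum>t = 1..n. card (labelings k A R 1 t - labelings k A R 1 (t - 1))
                     * card (labelings k B S (t + k) n))"
proof -
  let ?top = "\<lambda>t. labelings k A R 1 t - labelings k A R 1 (t - 1)"
  let ?L = "labelings k (A \<union> B) (R \<union> S \<union> A \<times> B) 1 n"
  let ?D = "SIGMA t:{1..n}. ?top t \<times> labelings k B S (t + k) n"
  have "bij_betw (\<lambda>f. (Max (f ` A), restrict f A, restrict f B)) ?L ?D"
  proof (rule bij_betwI[where g = "\<lambda>(t, g, h). override_on h g A"])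
    show "(\<lambda>f. (Max (f ` A), restrict f A, restrict f B)) \<in> ?L \<rightarrow> ?D"
    proof
      fix f assume f: "f \<in> ?L"
      define t where "t = Max (f ` A)"
      have "t \<in> f ` A"
        unfolding t_def using assms(4,5) by (intro Max_in) auto
      then obtain a where a: "a \<in> A" "f a = t"
        by auto
      have le: "\<forall>x\<in>A. f x \<le> t"
        using assms(4) t_def by auto
      have "t \<in> {1..n}"
        using f a by (auto simp: labelings_def PiE_iff)
      moreover have "restrict f A \<in> labelings k A R 1 t"
        using f le by (auto simp: labelings_def PiE_iff)
      moreover have "restrict f A \<notin> labelings k A R 1 (t - 1)"
      proof
        assume "restrict f A \<in> labelings k A R 1 (t - 1)"
        then have "f a \<le> t - 1"
          using a(1) by (auto simp: labelings_def PiE_iff)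
        then show False
          using a(2) \<open>t \<in> {1..n}\<close> by auto
      qed
      moreover have "restrict f B \<in> labelings k B S (t + k) n"
        using f a assms(1) by (fastforce simp: labelings_def PiE_iff)
      ultimately show "(Max (f ` A), restrict f A, restrict f B) \<in> ?D"
        by (simp add: t_def)
    qed
    show "(\<lambda>(t, g, h). override_on h g A) \<in> ?D \<rightarrow> ?L"
    proof
      fix x assume "x \<in> ?D"
      then obtain t g h where x: "x = (t, g, h)" and t: "t \<in> {1..n}"
        and g: "g \<in> ?top t" and h: "h \<in> labelings k B S (t + k) n"
        by blast
      have g_le: "g u \<le> t" if "u \<in> A" for u
        using g that by (auto simp: labelings_def PiE_iff)
      have h_ge: "t + k \<le> h v" if "v \<in> B" for v
        using h that by (auto simp: labelings_def PiE_iff)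
      have range: "override_on h g A \<in> A \<union> B \<rightarrow>\<^sub>E {1..n}"
        using t g h by (auto simp: labelings_def PiE_iff extensional_def override_on_def)
      have rel: "override_on h g A u + k \<le> override_on h g A v"
        if "(u, v) \<in> R \<union> S \<union> A \<times> B" for u v
        using that
      proof (elim UnE)
        assume "(u, v) \<in> R"
        then show ?thesis
          using g assms(2) by (auto simp: labelings_def)
      next
        assume "(u, v) \<in> S"
        moreover have "u \<in> B - A" "v \<in> B - A"
          using \<open>(u, v) \<in> S\<close> assms(1,3) by auto
        ultimately show ?thesis
          using h by (auto simp: labelings_def)
      next
        assume "(u, v) \<in> A \<times> B"
        then have "u \<in> A" "v \<in> B" "v \<notin> A"
          using assms(1) by auto
        then show ?thesis
          using g_le[of u] h_ge[of v] by simp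
      qed
      show "(\<lambda>(t, g, h). override_on h g A) x \<in> ?L"
        unfolding labelings_def x prod.case mem_Collect_eq using range rel by blast
    qed
    show "(\<lambda>(t, g, h). override_on h g A) (Max (f ` A), restrict f A, restrict f B) = f"
      if "f \<in> ?L" for f
      using that by (auto simp: labelings_def PiE_iff extensional_def override_on_def)
    show "(\<lambda>f. (Max (f ` A), restrict f A, restrict f B)) ((\<lambda>(t, g, h). override_on h g A) x) = x"
      if x_in: "x \<in> ?D" for x
    proof -
      obtain t g h where x: "x = (t, g, h)" and g: "g \<in> ?top t" and h: "h \<in> labelings k B S (t + k) n"
        using x_in by blast
      have "override_on h g A ` A = g ` A"
        by (auto simp: override_on_def)
      then show ?thesis
        using x g h assms(1) Max_image_top_labeling[OF assms(4) g]
        by (auto simp: labelings_def PiE_iff extensional_def override_on_def fun_eq_iff)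
    qed
  qed
  then have "card ?L = card ?D"
    by (rule bij_betw_same_card)
  also have "\<dots> = (\<Sum>t = 1..n. card (?top t) * card (labelings k B S (t + k) n))"
    using assms(4,6) by (simp add: card_SigmaI finite_labelings card_cartesian_product)
  finally show ?thesis .
qed

lemma card_labelings_series_diff:
  assumes "A \<inter> B = {}" "R \<subseteq> A \<times> A" "S \<subseteq> B \<times> B"
    and "finite A" "A \<noteq> {}" "finite B" "k \<le> 1"
  shows "real (card (labelings k (A \<union> B) (R \<union> S \<union> A \<times> B) 1 n))
       = (\<Sum>t = 1..n. (real (card (labelings k A R 1 t)) - real (card (labelings k A R 1 (t - 1))))
                     * real (card (labelings k B S 1 (n + 1 - t - k))))"
  unfolding card_labelings_series[OF assms(1-6)] of_nat_sum
proof (rule sum.cong[OF refl])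
  fix t assume t: "t \<in> {1..n}"
  have "card (labelings k A R 1 t - labelings k A R 1 (t - 1))
      = card (labelings k A R 1 t) - card (labelings k A R 1 (t - 1))"
    using assms(4) by (intro card_Diff_subset finite_labelings labelings_mono) auto
  moreover have "card (labelings k A R 1 (t - 1)) \<le> card (labelings k A R 1 t)"
    using assms(4) by (intro card_mono finite_labelings labelings_mono) auto
  moreover have "labelings k B S (t + k) n
      = labelings k B S ((t + k - 1) + 1) ((t + k - 1) + (n + 1 - t - k))"
    using t assms(7) by (intro arg_cong2[where f = "labelings k B S"]) auto
  ultimately show "real (card (labelings k A R 1 t - labelings k A R 1 (t - 1))
        * card (labelings k B S (t + k) n))
      = (real (card (labelings k A R 1 t)) - real (card (labelings k A R 1 (t - 1))))
        * real (card (labelings k B S 1 (n + 1 - t - k)))"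
    by (simp only: card_labelings_shift of_nat_mult of_nat_diff)
qed

definition reciprocal_order_poly :: "'a set \<Rightarrow> ('a \<times> 'a) set \<Rightarrow> real poly \<Rightarrow> bool" where
  "reciprocal_order_poly A R P \<longleftrightarrow> (\<forall>n. real (card (labelings 1 A R 1 n)) = poly P (real n)
     \<and> real (card (labelings 0 A R 1 n)) = (-1) ^ card A * poly P (- real n))"

lemma reciprocal_order_poly_singleton: "reciprocal_order_poly {a} {} [:0, 1:]"
  using card_labelings_singleton[of 1 a] card_labelings_singleton[of 0 a]
  by (simp add: reciprocal_order_poly_def)

lemma reciprocal_order_poly_parallel:
  assumes "reciprocal_order_poly A R PA" "reciprocal_order_poly B S PB"
    and "A \<inter> B = {}" "finite A" "finite B" "R \<subseteq> A \<times> A" "S \<subseteq> B \<times> B"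
  shows "reciprocal_order_poly (A \<union> B) (R \<union> S) (PA * PB)"
proof -
  have "card (A \<union> B) = card A + card B"
    using assms(3-5) by (simp add: card_Un_disjoint)
  then show ?thesis
    using assms(1,2) card_labelings_parallel[OF assms(3,6,7)]
    by (simp add: reciprocal_order_poly_def power_add)
qed

lemma reciprocal_order_poly_series:
  assumes PA: "reciprocal_order_poly A R PA" and PB: "reciprocal_order_poly B S PB"
    and "A \<inter> B = {}" "R \<subseteq> A \<times> A" "S \<subseteq> B \<times> B" "finite A" "A \<noteq> {}" "finite B"
  obtains P where "reciprocal_order_poly (A \<union> B) (R \<union> S \<union> A \<times> B) P"
proof -
  have PA': "real (card (labelings 1 A R 1 n)) = poly PA (real n)"
    "real (card (labelings 0 A R 1 n)) = (-1) ^ card A * poly PA (- real n)" for n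
    using PA by (simp_all add: reciprocal_order_poly_def)
  have PB': "real (card (labelings 1 B S 1 n)) = poly PB (real n)"
    "real (card (labelings 0 B S 1 n)) = (-1) ^ card B * poly PB (- real n)" for n
    using PB by (simp_all add: reciprocal_order_poly_def)
  have card_AB: "card (A \<union> B) = card A + card B"
    using assms(3,6,8) by (simp add: card_Un_disjoint)
  obtain P where P:
    "\<And>n. (\<Sum>t = 1..n. (poly PA (real t) - poly PA (real (t - 1))) * poly PB (real (n - t)))
        = poly P (real n)"
    "\<And>n. (\<Sum>t = 1..n. (poly PA (- real t) - poly PA (- real (t - 1))) * poly PB (- real (n + 1 - t)))
        = poly P (- real n)"
    using poly_difference_convolution[of PA PB] by blast
  note series = card_labelings_series_diff[OF assms(3-8)]
  have "real (card (labelings 1 (A \<union> B) (R \<union> S \<union> A \<times> B) 1 n)) = poly P (real n)" for n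
  proof -
    have "n + 1 - t - 1 = n - t" for t
      by simp
    then show ?thesis
      by (simp only: series PA' PB' P(1))
  qed
  moreover have "real (card (labelings 0 (A \<union> B) (R \<union> S \<union> A \<times> B) 1 n))
      = (-1) ^ card (A \<union> B) * poly P (- real n)" for n
  proof -
    have "real (card (labelings 0 (A \<union> B) (R \<union> S \<union> A \<times> B) 1 n))
        = (\<Sum>t = 1..n. (-1) ^ (card A + card B)
            * ((poly PA (- real t) - poly PA (- real (t - 1))) * poly PB (- real (n + 1 - t))))"
      by (simp only: series PA' PB' diff_zero) (simp add: power_add algebra_simps)
    then show ?thesis
      by (simp only: card_AB sum_distrib_left[symmetric] P(2))
  qed
  ultimately have "reciprocal_order_poly (A \<union> B) (R \<union> S \<union> A \<times> B) P"
    unfolding reciprocal_order_poly_def by blast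
  then show ?thesis
    by (rule that)
qed

lemma series_parallel_reciprocal_order_poly:
  assumes "series_parallel A R"
  obtains P where "reciprocal_order_poly A R P"
  using assms
proof (induction arbitrary: thesis rule: series_parallel.induct)
  case (sp_single a)
  show ?case
    by (rule sp_single.prems[OF reciprocal_order_poly_singleton])
next
  case (sp_par A R B S)
  obtain PA PB where "reciprocal_order_poly A R PA" "reciprocal_order_poly B S PB"
    using sp_par.IH by metis
  moreover have "finite A" "R \<subseteq> A \<times> A" "finite B" "S \<subseteq> B \<times> B"
    using series_parallel_finite_nonempty sp_par.hyps(1,2) by blast+
  ultimately show ?case
    using sp_par.hyps(3) reciprocal_order_poly_parallel sp_par.prems by metis
next
  case (sp_ser A R B S)
  obtain PA PB where "reciprocal_order_poly A R PA" "reciprocal_order_poly B S PB"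
    using sp_ser.IH by metis
  moreover have "finite A" "A \<noteq> {}" "R \<subseteq> A \<times> A" "finite B" "S \<subseteq> B \<times> B"
    using series_parallel_finite_nonempty sp_ser.hyps(1,2) by blast+
  ultimately show ?case
    using sp_ser.hyps(3) reciprocal_order_poly_series sp_ser.prems by metis
qed

lemma Omega_reciprocity:
  assumes "series_parallel A R"
  obtains P where "\<And>n. real (Omega A R n) = poly P (real n)"
    "\<And>n. real (Omega_plus A R n) = (-1) ^ card A * poly P (- real n)"
proof -
  obtain P where "reciprocal_order_poly A R P"
    using series_parallel_reciprocal_order_poly[OF assms] by blast
  then show ?thesis
    by (intro that) (simp_all add: reciprocal_order_poly_def Omega_eq_card_labelings Omega_plus_eq_card_labelings)
qed

lemma inverse_one_minus_X_power_nth: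
  "inverse ((1 - fps_X) ^ (i + 1) :: real fps) $ k = real ((i + k) choose i)"
proof -
  have "inverse ((1 - fps_const 1 * fps_X) ^ (i + 1) :: real fps)
      = Abs_fps (\<lambda>k. of_nat ((i + 1 + k - 1) choose k) * 1 ^ k)"
    by (rule one_minus_const_fps_X_neg_power') simp
  then show ?thesis
    by (simp add: binomial_symmetric[of i "i + k"])
qed

lemma fps_X_power_over_one_minus_X_power_nth:
  "(fps_X ^ i * inverse ((1 - fps_X) ^ (i + 1)) :: real fps) $ n = real (n choose i)"
  unfolding fps_X_power_mult_nth inverse_one_minus_X_power_nth by (auto simp: binomial_eq_0)

lemma one_minus_X_power_nth: "((1 - fps_X) ^ m :: real fps) $ j = (-1) ^ j * real (m choose j)"
proof (induction m arbitrary: j)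
  case (Suc m)
  have "((1 - fps_X) ^ Suc m :: real fps) = (1 - fps_X) ^ m - fps_X * (1 - fps_X) ^ m"
    by (simp add: algebra_simps)
  then show ?case
    by (cases j) (simp_all add: Suc algebra_simps)
qed (simp add: fps_one_nth)

lemma Omega_eq_gbinomial_sum:
  assumes "A \<noteq> {}"
    and c: "ZX A R = (\<Sum>i = 1..card A. fps_const (c i) * fps_X ^ i * inverse ((1 - fps_X) ^ (i + 1)))"
  shows "real (Omega A R n) = (\<Sum>i = 1..card A. c i * (real n gchoose i))"
proof (cases "n = 0")
  case True
  have "A \<rightarrow>\<^sub>E {1..0::nat} = {}"
    using assms(1) by (auto simp: PiE_eq_empty_iff)
  moreover have "(0::real) gchoose i = 0" if "i \<ge> 1" for i
    using that by (cases i) auto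
  ultimately show ?thesis
    using True by (simp add: Omega_def)
next
  case False
  then have "real (Omega A R n) = ZX A R $ n"
    by (simp add: ZX_def)
  also have "\<dots> = (\<Sum>i = 1..card A. c i * (real n gchoose i))"
    by (simp only: c fps_sum_nth mult.assoc fps_mult_left_const_nth
        fps_X_power_over_one_minus_X_power_nth binomial_gbinomial)
  finally show ?thesis .
qed

lemma Omega_plus_eq_gbinomial_sum:
  assumes sp: "series_parallel A R"
    and c: "ZX A R = (\<Sum>i = 1..card A. fps_const (c i) * fps_X ^ i * inverse ((1 - fps_X) ^ (i + 1)))"
  shows "real (Omega_plus A R n) = (-1) ^ card A * (\<Sum>i = 1..card A. c i * (- real n gchoose i))"
proof -
  obtain P where P: "\<And>n. real (Omega A R n) = poly P (real n)"
    "\<And>n. real (Omega_plus A R n) = (-1) ^ card A * poly P (- real n)"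
    using Omega_reciprocity[OF sp] by blast
  define Q where "Q = (\<Sum>i = 1..card A. smult (c i) (gbinomial_poly i))"
  have poly_Q: "poly Q x = (\<Sum>i = 1..card A. c i * (x gchoose i))" for x
    by (simp add: Q_def poly_sum)
  have "A \<noteq> {}"
    using series_parallel_finite_nonempty[OF sp] by blast
  then have "P = Q"
    using Omega_eq_gbinomial_sum[OF _ c] by (intro poly_eq_if_eq_on_nat) (simp add: poly_Q flip: P(1))
  then show ?thesis
    by (simp add: P(2) poly_Q)
qed

lemma ZX_plus_eq:
  assumes "series_parallel A R"
    and "ZX A R = (\<Sum>i = 1..card A. fps_const (c i) * fps_X ^ i * inverse ((1 - fps_X) ^ (i + 1)))"
  shows "ZX_plus A R
       = fps_X * (\<Sum>i = 1..card A. fps_const (c i * (-1) ^ (card A + i)) * inverse ((1 - fps_X) ^ (i + 1)))"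
proof (rule fps_ext)
  fix n
  let ?N = "card A"
  show "ZX_plus A R $ n
      = (fps_X * (\<Sum>i = 1..?N. fps_const (c i * (-1) ^ (?N + i)) * inverse ((1 - fps_X) ^ (i + 1)))) $ n"
  proof (cases "n = 0")
    case False
    have "ZX_plus A R $ n = (-1) ^ ?N * (\<Sum>i = 1..?N. c i * (- real n gchoose i))"
      using False Omega_plus_eq_gbinomial_sum[OF assms] by (simp add: ZX_plus_def)
    also have "\<dots> = (\<Sum>i = 1..?N. c i * (-1) ^ (?N + i) * real ((i + (n - 1)) choose i))"
      using False by (simp add: gbinomial_minus_of_nat sum_distrib_left power_add algebra_simps)
    also have "\<dots> = (fps_X * (\<Sum>i = 1..?N. fps_const (c i * (-1) ^ (?N + i)) * inverse ((1 - fps_X) ^ (i + 1)))) $ n"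
      using False
      unfolding fps_X_mult_nth fps_sum_nth fps_mult_left_const_nth inverse_one_minus_X_power_nth
      by (simp add: add.commute)
    finally show ?thesis .
  qed (simp add: ZX_plus_def)
qed

lemma hstar_eq:
  assumes "series_parallel A R"
    and "ZX A R = (\<Sum>i = 1..card A. fps_const (c i) * fps_X ^ i * inverse ((1 - fps_X) ^ (i + 1)))"
  shows "hstar A R = (\<Sum>i = 1..card A. fps_const (c i * (-1) ^ (card A + i)) * (1 - fps_X) ^ (card A - i))"
proof -
  let ?N = "card A"
  have cancel: "(1 - fps_X) ^ (?N + 1) * inverse ((1 - fps_X) ^ (i + 1)) = ((1 - fps_X) ^ (?N - i) :: real fps)"
    if "i \<in> {1..?N}" for i
  proof -
    have unit: "(1 - fps_X) ^ (i + 1) * inverse ((1 - fps_X) ^ (i + 1)) = (1 :: real fps)"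
      by (rule inverse_mult_eq_1') simp
    have "?N + 1 = (?N - i) + (i + 1)"
      using that by simp
    then have "(1 - fps_X) ^ (?N + 1) = ((1 - fps_X) ^ (?N - i) :: real fps) * (1 - fps_X) ^ (i + 1)"
      by (metis power_add)
    then show ?thesis
      by (simp only: mult.assoc unit mult_1_right)
  qed
  let ?G = "\<Sum>i = 1..?N. fps_const (c i * (-1) ^ (?N + i)) * inverse ((1 - fps_X) ^ (i + 1))"
  have "hstar A R = fps_shift 1 (((1 - fps_X) ^ (?N + 1) * ?G) * fps_X)"
    unfolding hstar_def ZX_plus_eq[OF assms] by (simp only: mult.commute[of fps_X] mult.assoc)
  also have "\<dots> = (1 - fps_X) ^ (?N + 1) * ?G"
    by (rule fps_shift_times_fps_X')
  also have "\<dots> = (\<Sum>i = 1..?N. fps_const (c i * (-1) ^ (?N + i)) * (1 - fps_X) ^ (?N - i))"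
    unfolding sum_distrib_left
    by (intro sum.cong refl) (simp only: mult.left_commute[of "(1 - fps_X) ^ (?N + 1)"] cancel)
  finally show ?thesis .
qed

lemma alternating_sum_choose_upto:
  assumes "m \<le> N"
  shows "(\<Sum>j = 0..N. (-1) ^ j * real (m choose j)) = (if m = 0 then 1 else 0)"
proof -
  have "(\<Sum>j = 0..N. (-1) ^ j * real (m choose j)) = (\<Sum>j\<le>m. (-1) ^ j * real (m choose j))"
    using assms by (intro sum.mono_neutral_right) auto
  also have "\<dots> = (if m = 0 then 1 else 0)"
    using choose_alternating_sum[of m, where 'a = real] by auto
  finally show ?thesis .
qed

lemma sum_one_minus_X_powers_nth:
  "(\<Sum>i = 1..N. fps_const (b i) * (1 - fps_X) ^ (N - i) :: real fps) $ j
     = (\<Sum>i = 1..N - j. b i * (-1) ^ j * real ((N - i) choose j))"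
proof -
  have "(\<Sum>i = 1..N. fps_const (b i) * (1 - fps_X) ^ (N - i) :: real fps) $ j
      = (\<Sum>i = 1..N. b i * (-1) ^ j * real ((N - i) choose j))"
    by (simp only: fps_sum_nth fps_mult_left_const_nth one_minus_X_power_nth mult.assoc)
  also have "\<dots> = (\<Sum>i = 1..N - j. b i * (-1) ^ j * real ((N - i) choose j))"
    by (intro sum.mono_neutral_right) (auto simp: binomial_eq_0)
  finally show ?thesis .
qed

lemma sum_coeffs_sum_one_minus_X_powers:
  assumes "N \<ge> 1"
  shows "(\<Sum>j = 0..N. (\<Sum>i = 1..N. fps_const (b i) * (1 - fps_X) ^ (N - i) :: real fps) $ j) = b N"
proof -
  have "(\<Sum>j = 0..N. (\<Sum>i = 1..N. fps_const (b i) * (1 - fps_X) ^ (N - i) :: real fps) $ j)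
      = (\<Sum>i = 1..N. b i * (\<Sum>j = 0..N. (-1) ^ j * real ((N - i) choose j)))"
    by (simp add: fps_sum_nth one_minus_X_power_nth sum_distrib_left sum.swap[of _ "{0..N}"])
  also have "\<dots> = (\<Sum>i = 1..N. if i = N then b i else 0)"
    by (intro sum.cong refl) (auto simp: alternating_sum_choose_upto)
  also have "\<dots> = b N"
    using assms by simp
  finally show ?thesis .
qed

lemma minus_one_power_sign_shift:
  fixes x y :: real
  assumes "i \<le> N"
  shows "x * (-1) ^ (N + i) * (-1) ^ j * y = (-1) ^ (N - i + j) * x * y"
proof -
  have exponent: "N + i + j = (N - i + j) + 2 * i"
    using assms by simp
  have "(-1 :: real) ^ (N + i) * (-1) ^ j = (-1) ^ (N + i + j)"
    by (simp only: power_add)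
  also have "\<dots> = (-1) ^ (N - i + j) * ((-1) ^ 2) ^ i"
    by (simp only: exponent power_add power_mult)
  finally have "(-1 :: real) ^ (N + i) * (-1) ^ j = (-1) ^ (N - i + j)"
    by simp
  then show ?thesis
    by (simp only: mult_ac)
qed

theorem proposition2p11:
  fixes A :: "'a set" and R :: "('a \<times> 'a) set" and c :: "nat \<Rightarrow> real"
  assumes sp: "series_parallel A R"
    and c: "ZX A R = (\<Sum>i = 1..card A. fps_const (c i) * fps_X ^ i
                         * inverse ((1 - fps_X) ^ (i + 1)))"
  shows "(\<forall>j > card A. fps_nth (hstar A R) j = 0)
    \<and> (\<forall>j \<le> card A. fps_nth (hstar A R) j =
          (\<Sum>i = 1..card A - j. (-1) ^ (card A - i + j) * c i * real (card A - i choose j)))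
    \<and> c (card A) = (\<Sum>i = 0..card A. fps_nth (hstar A R) i)"
proof -
  let ?N = "card A"
  let ?b = "\<lambda>i. c i * (-1) ^ (?N + i)"
  have coeff: "hstar A R $ j = (\<Sum>i = 1..?N - j. ?b i * (-1) ^ j * real ((?N - i) choose j))" for j
    unfolding hstar_eq[OF sp c] by (rule sum_one_minus_X_powers_nth)
  have "?N \<ge> 1"
    using series_parallel_finite_nonempty[OF sp] by (simp add: Suc_le_eq card_gt_0_iff)
  moreover have "(-1 :: real) ^ (?N + ?N) = 1"
    by (simp flip: mult_2)
  ultimately have sum_coeffs: "(\<Sum>j = 0..?N. hstar A R $ j) = c ?N"
    using sum_coeffs_sum_one_minus_X_powers[of ?N ?b] unfolding hstar_eq[OF sp c] by simp
  show ?thesis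
  proof (intro conjI allI impI)
    show "hstar A R $ j = 0" if "j > ?N" for j
      using that by (simp add: coeff)
    show "hstar A R $ j
        = (\<Sum>i = 1..?N - j. (-1) ^ (?N - i + j) * c i * real (?N - i choose j))" for j
      unfolding coeff by (intro sum.cong refl minus_one_power_sign_shift) auto
  qed (simp add: sum_coeffs)
qed

end
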